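(* Let $D$ be a division algebra and let $\sigma_1,\ldots,\sigma_n$ be pairwise commuting automorphisms of $D$. If the tuple $(\sigma_1,\ldots,\sigma_n)$ is not automorphically normalizable over $D$, then for any positive integers $d_1,\ldots,d_n$ the tuple $(\sigma_1^{d_1},\ldots,\sigma_n^{d_n})$ is also not automorphically normalizable over $D$.
   Context: All rings are associative with unity. For commuting automorphisms $\tau_1,\ldots,\tau_n$ of $D$, $D[t_1,\ldots,t_n;\tau_1,\ldots,\tau_n]$ is the skew polynomial ring in pairwise commuting variables with $t_ia=\tau_i(a)t_i$ for $a\in D$. For a ring $S\supseteq D$, $a\in S$ is automorphic over $D$ with respect to $\tau$ if $ab=\tau(b)a$ for all $b\in D$. Commuting $a_1,\ldots,a_m\in S$ are (left) algebraically independent over $D$ if monomials in them are left linearly independent over $D$. $S$ is automorphically normalizable over $D$ if there exist $m\ge0$ and commuting $a_1,\ldots,a_m\in S$, automorphic over $D$ with respect to pairwise commuting automorphisms, left algebraically independent over $D$, such that $S$ is finitely generated as a left module over the subring $D[a_1,\ldots,a_m]$ generated by $D\cup\{a_1,\ldots,a_m\}$. A tuple $(\tau_1,\ldots,\tau_n)$ of commuting automorphisms is automorphically normalizable over $D$ if every quotient of $D[t_1,\ldots,t_n;\tau_1,\ldots,\tau_n]$ by a proper two-sided ideal is automorphically normalizable over $D$. *)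

theory Defs
  imports "HOL-Algebra.QuotRing" "HOL-Algebra.Generated_Rings"
begin

definition ring_automorphism :: "('a::division_ring \<Rightarrow> 'a) \<Rightarrow> bool" where
  "ring_automorphism f \<longleftrightarrow> bij f \<and> (\<forall>x y. f (x + y) = f x + f y)
      \<and> (\<forall>x y. f (x * y) = f x * f y) \<and> f 1 = 1"

definition commuting_automorphisms :: "(nat \<Rightarrow> 'a::division_ring \<Rightarrow> 'a) \<Rightarrow> nat \<Rightarrow> bool" where
  "commuting_automorphisms \<sigma> n \<longleftrightarrow> (\<forall>i<n. ring_automorphism (\<sigma> i))
      \<and> (\<forall>i<n. \<forall>j<n. \<sigma> i \<circ> \<sigma> j = \<sigma> j \<circ> \<sigma> i)"

text \<open>Monomials t^e are exponent vectors e :: nat => nat with e i = 0 for i >= n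
  (variable t_(i+1) has index i).  sigma^e = sigma_0^(e 0) o ... o sigma_(n-1)^(e (n-1)).\<close>

fun aut_pow :: "(nat \<Rightarrow> 'a \<Rightarrow> 'a) \<Rightarrow> nat \<Rightarrow> (nat \<Rightarrow> nat) \<Rightarrow> 'a \<Rightarrow> 'a" where
  "aut_pow \<sigma> 0 e = id"
| "aut_pow \<sigma> (Suc k) e = aut_pow \<sigma> k e \<circ> (\<sigma> k ^^ e k)"

definition skew_carrier :: "nat \<Rightarrow> ((nat \<Rightarrow> nat) \<Rightarrow> 'a::division_ring) set" where
  "skew_carrier n = {p. finite {e. p e \<noteq> 0} \<and> (\<forall>e. p e \<noteq> 0 \<longrightarrow> (\<forall>i\<ge>n. e i = 0))}"

text \<open>(a t^alpha)(b t^beta) = a sigma^alpha(b) t^(alpha+beta).\<close>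
definition skew_mult :: "(nat \<Rightarrow> 'a::division_ring \<Rightarrow> 'a) \<Rightarrow> nat
    \<Rightarrow> ((nat \<Rightarrow> nat) \<Rightarrow> 'a) \<Rightarrow> ((nat \<Rightarrow> nat) \<Rightarrow> 'a) \<Rightarrow> ((nat \<Rightarrow> nat) \<Rightarrow> 'a)" where
  "skew_mult \<sigma> n p q = (\<lambda>\<gamma>. \<Sum>\<alpha> \<in> {\<alpha>. \<forall>i. \<alpha> i \<le> \<gamma> i}.
       p \<alpha> * aut_pow \<sigma> n \<alpha> (q (\<lambda>i. \<gamma> i - \<alpha> i)))"

definition skew_const :: "'a::division_ring \<Rightarrow> ((nat \<Rightarrow> nat) \<Rightarrow> 'a)" where
  "skew_const d = (\<lambda>e. if e = (\<lambda>_. 0) then d else 0)"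

definition skew_poly_ring :: "(nat \<Rightarrow> 'a::division_ring \<Rightarrow> 'a) \<Rightarrow> nat \<Rightarrow> ((nat \<Rightarrow> nat) \<Rightarrow> 'a) ring" where
  "skew_poly_ring \<sigma> n = \<lparr>
     carrier = skew_carrier n,
     mult = skew_mult \<sigma> n,
     one = skew_const 1,
     zero = (\<lambda>_. 0),
     add = (\<lambda>p q e. p e + q e) \<rparr>"

definition automorphic_over :: "('b, 'c) ring_scheme \<Rightarrow> ('a \<Rightarrow> 'b) \<Rightarrow> ('a \<Rightarrow> 'a) \<Rightarrow> 'b \<Rightarrow> bool" where
  "automorphic_over S \<iota> \<tau> x \<longleftrightarrow> x \<in> carrier S \<and> (\<forall>b. x \<otimes>\<^bsub>S\<^esub> \<iota> b = \<iota> (\<tau> b) \<otimes>\<^bsub>S\<^esub> x)"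

fun elem_monomial :: "('b, 'c) ring_scheme \<Rightarrow> (nat \<Rightarrow> 'b) \<Rightarrow> nat \<Rightarrow> (nat \<Rightarrow> nat) \<Rightarrow> 'b" where
  "elem_monomial S a 0 \<beta> = \<one>\<^bsub>S\<^esub>"
| "elem_monomial S a (Suc k) \<beta> = elem_monomial S a k \<beta> \<otimes>\<^bsub>S\<^esub> (a k [^]\<^bsub>S\<^esub> \<beta> k)"

definition left_alg_indep :: "('b, 'c) ring_scheme \<Rightarrow> ('a::zero \<Rightarrow> 'b) \<Rightarrow> (nat \<Rightarrow> 'b) \<Rightarrow> nat \<Rightarrow> bool" where
  "left_alg_indep S \<iota> a m \<longleftrightarrow>
     (\<forall>B c. finite B \<and> (\<forall>\<beta>\<in>B. \<forall>i\<ge>m. \<beta> i = 0) \<and>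
        finsum S (\<lambda>\<beta>. \<iota> (c \<beta>) \<otimes>\<^bsub>S\<^esub> elem_monomial S a m \<beta>) B = \<zero>\<^bsub>S\<^esub>
        \<longrightarrow> (\<forall>\<beta>\<in>B. c \<beta> = 0))"

definition fin_gen_left_module :: "('b, 'c) ring_scheme \<Rightarrow> 'b set \<Rightarrow> bool" where
  "fin_gen_left_module S T \<longleftrightarrow>
     (\<exists>G. finite G \<and> G \<subseteq> carrier S \<and>
        (\<forall>s\<in>carrier S. \<exists>r. (\<forall>g\<in>G. r g \<in> T) \<and> s = finsum S (\<lambda>g. r g \<otimes>\<^bsub>S\<^esub> g) G))"

definition aut_normalizable :: "('b, 'c) ring_scheme \<Rightarrow> ('a::division_ring \<Rightarrow> 'b) \<Rightarrow> bool" where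
  "aut_normalizable S \<iota> \<longleftrightarrow>
     (\<exists>m a \<tau>. commuting_automorphisms \<tau> m
        \<and> (\<forall>i<m. automorphic_over S \<iota> (\<tau> i) (a i))
        \<and> (\<forall>i<m. \<forall>j<m. a i \<otimes>\<^bsub>S\<^esub> a j = a j \<otimes>\<^bsub>S\<^esub> a i)
        \<and> left_alg_indep S \<iota> a m
        \<and> fin_gen_left_module S (generate_ring S (range \<iota> \<union> a ` {..<m})))"

text \<open>A tuple (sigma_0..sigma_(n-1)) is automorphically normalizable over D if every quotient
  of D[t_1..t_n; sigma] by a proper two-sided ideal (HOL-Algebra ideals are two-sided)
  is automorphically normalizable over D, D embedded via d |-> class of the constant d.\<close>
definition aut_normalizable_tuple :: "(nat \<Rightarrow> 'a::division_ring \<Rightarrow> 'a) \<Rightarrow> nat \<Rightarrow> bool" where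
  "aut_normalizable_tuple \<sigma> n \<longleftrightarrow>
     (\<forall>I. ideal I (skew_poly_ring \<sigma> n) \<and> I \<noteq> carrier (skew_poly_ring \<sigma> n) \<longrightarrow>
        aut_normalizable (skew_poly_ring \<sigma> n Quot I)
          (\<lambda>d. I +>\<^bsub>skew_poly_ring \<sigma> n\<^esub> skew_const d))"

end

theory Submission
  imports Defs "HOL-Algebra.UnivPoly"
begin

(* The substitution t_i |-> t_i^(d_i) is an injective ring homomorphism from D[t; sigma^d] into
   D[t; sigma], and D[t; sigma] is generated as a left module over its image by the finitely many
   monomials t^r with r_i < d_i.  Let I be a proper ideal of D[t; sigma] whose quotient S is not
   automorphically normalizable, and let J be its preimage, a proper ideal of D[t; sigma^d].  Then
   D[t; sigma^d]/J embeds into S compatibly with D, and S is a finitely generated left module over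
   the image.  An injective homomorphism preserves automorphic, commuting and left algebraically
   independent elements, and finite generation is transitive, so a normalization of D[t; sigma^d]/J
   would be carried to one of S.  Hence J witnesses that sigma^d is not normalizable either. *)

definition left_span :: "('b, 'c) ring_scheme \<Rightarrow> 'b set \<Rightarrow> 'b set \<Rightarrow> 'b set" where
  "left_span S T G = {finsum S (\<lambda>g. r g \<otimes>\<^bsub>S\<^esub> g) G | r. r \<in> G \<rightarrow> T}"

lemma left_spanI: "r \<in> G \<rightarrow> T \<Longrightarrow> finsum S (\<lambda>g. r g \<otimes>\<^bsub>S\<^esub> g) G \<in> left_span S T G"
  unfolding left_span_def by blast

lemma fin_gen_left_module_iff:
  "fin_gen_left_module S T \<longleftrightarrow>
     (\<exists>G. finite G \<and> G \<subseteq> carrier S \<and> carrier S \<subseteq> left_span S T G)"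
proof -
  have "(\<forall>s\<in>carrier S. \<exists>r. (\<forall>g\<in>G. r g \<in> T) \<and> s = finsum S (\<lambda>g. r g \<otimes>\<^bsub>S\<^esub> g) G)
      \<longleftrightarrow> carrier S \<subseteq> left_span S T G" for G
    unfolding left_span_def Pi_def by blast
  then show ?thesis unfolding fin_gen_left_module_def by simp
qed

lemma (in ring) finsum_in_subring:
  assumes "subring T R" and "f \<in> A \<rightarrow> T"
  shows "finsum R f A \<in> T"
  using assms(2)
proof (induct A rule: infinite_finite_induct)
  case (insert a A)
  then have "f a \<in> T" "f \<in> A \<rightarrow> T" "f \<in> insert a A \<rightarrow> carrier R"
    using subringE(1)[OF assms(1)] by auto
  then show ?case using insert.hyps subringE(7)[OF assms(1)] by (simp add: finsum_insert)
qed (use subringE(2)[OF assms(1)] in auto)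

lemma (in abelian_monoid) finsum_Times:
  assumes "finite A" and "finite B" and "\<And>a b. a \<in> A \<Longrightarrow> b \<in> B \<Longrightarrow> f a b \<in> carrier G"
  shows "finsum G (\<lambda>p. f (fst p) (snd p)) (A \<times> B) = finsum G (\<lambda>b. finsum G (\<lambda>a. f a b) A) B"
proof -
  have "finsum G (\<lambda>p. f (fst p) (snd p)) (\<Union>b\<in>B. (\<lambda>a. (a, b)) ` A)
      = finsum G (\<lambda>b. finsum G (\<lambda>p. f (fst p) (snd p)) ((\<lambda>a. (a, b)) ` A)) B"
    using assms by (intro add.finprod_UN_disjoint) (auto simp: pairwise_def disjnt_def)
  also have "\<dots> = finsum G (\<lambda>b. finsum G (\<lambda>a. f a b) A) B"
  proof (intro add.finprod_cong')
    fix b assume "b \<in> B"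
    then show "finsum G (\<lambda>p. f (fst p) (snd p)) ((\<lambda>a. (a, b)) ` A) = finsum G (\<lambda>a. f a b) A"
      using assms(3) by (subst finsum_reindex) (auto simp: inj_on_def)
  qed (use assms(3) in auto)
  also have "(\<Union>b\<in>B. (\<lambda>a. (a, b)) ` A) = A \<times> B" by auto
  finally show ?thesis .
qed

lemma (in ring) finsum_in_left_span_image:
  assumes "subring T R" and "finite K" and "g \<in> K \<rightarrow> carrier R" and "c \<in> K \<rightarrow> T"
  shows "finsum R (\<lambda>k. c k \<otimes> g k) K \<in> left_span R T (g ` K)"
proof -
  let ?fibre = "\<lambda>x. {k \<in> K. g k = x}"
  have cR: "c \<in> K \<rightarrow> carrier R" using assms(4) subringE(1)[OF assms(1)] by blast
  have "finsum R (\<lambda>k. c k \<otimes> g k) (\<Union>x\<in>g ` K. ?fibre x)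
      = finsum R (\<lambda>x. finsum R (\<lambda>k. c k \<otimes> g k) (?fibre x)) (g ` K)"
    using assms(2,3) cR by (intro add.finprod_UN_disjoint) (auto simp: pairwise_def disjnt_def)
  also have "\<dots> = finsum R (\<lambda>x. finsum R c (?fibre x) \<otimes> x) (g ` K)"
  proof (intro add.finprod_cong')
    fix x assume "x \<in> g ` K"
    then have "finsum R c (?fibre x) \<otimes> x = finsum R (\<lambda>k. c k \<otimes> x) (?fibre x)"
      using assms(2,3) cR by (intro finsum_ldistr) auto
    also have "\<dots> = finsum R (\<lambda>k. c k \<otimes> g k) (?fibre x)"
      using assms(3) cR by (intro add.finprod_cong') auto
    finally show "finsum R (\<lambda>k. c k \<otimes> g k) (?fibre x) = finsum R c (?fibre x) \<otimes> x" ..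
  qed (use assms(3) cR in \<open>auto intro!: finsum_closed\<close>)
  also have "(\<Union>x\<in>g ` K. ?fibre x) = K" by auto
  finally have "finsum R (\<lambda>k. c k \<otimes> g k) K = finsum R (\<lambda>x. finsum R c (?fibre x) \<otimes> x) (g ` K)" .
  moreover have "(\<lambda>x. finsum R c (?fibre x)) \<in> g ` K \<rightarrow> T"
    using assms(4) by (auto intro!: finsum_in_subring[OF assms(1)])
  ultimately show ?thesis using left_spanI[of "\<lambda>x. finsum R c (?fibre x)" "g ` K" T R] by simp
qed

lemma (in ring) finsum_in_left_span_tower:
  assumes "subring T R" and "finite G" and "finite H" and "G \<subseteq> carrier R" and "H \<subseteq> carrier R"
    and "r \<in> H \<rightarrow> left_span R T G"
  shows "finsum R (\<lambda>h. r h \<otimes> h) H \<in> left_span R T {g \<otimes> h | g h. g \<in> G \<and> h \<in> H}"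
proof -
  have "\<forall>h\<in>H. \<exists>c. c \<in> G \<rightarrow> T \<and> r h = finsum R (\<lambda>g. c g \<otimes> g) G"
    using assms(6) unfolding left_span_def by blast
  then obtain c where c: "\<forall>h\<in>H. c h \<in> G \<rightarrow> T \<and> r h = finsum R (\<lambda>g. c h g \<otimes> g) G"
    by (rule bchoice[elim_format]) blast
  have cR: "c h g \<in> carrier R" if "h \<in> H" "g \<in> G" for h g
    using c that subringE(1)[OF assms(1)] by blast
  have "finsum R (\<lambda>h. r h \<otimes> h) H = finsum R (\<lambda>h. finsum R (\<lambda>g. c h g \<otimes> (g \<otimes> h)) G) H"
  proof (intro add.finprod_cong')
    fix h assume h: "h \<in> H"
    have "r h \<otimes> h = finsum R (\<lambda>g. c h g \<otimes> g \<otimes> h) G"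
      using c h cR assms(2,4,5) by (auto intro!: finsum_ldistr)
    also have "\<dots> = finsum R (\<lambda>g. c h g \<otimes> (g \<otimes> h)) G"
      using cR h assms(4,5) by (intro add.finprod_cong') (auto simp: m_assoc subset_iff)
    finally show "r h \<otimes> h = finsum R (\<lambda>g. c h g \<otimes> (g \<otimes> h)) G" .
  qed (use cR assms(4,5) in \<open>auto intro!: finsum_closed simp: subset_iff\<close>)
  also have "\<dots> = finsum R (\<lambda>p. c (snd p) (fst p) \<otimes> (fst p \<otimes> snd p)) (G \<times> H)"
    using cR assms(2-5) by (intro finsum_Times[symmetric]) (auto simp: subset_iff)
  also have "\<dots> \<in> left_span R T ((\<lambda>p. fst p \<otimes> snd p) ` (G \<times> H))"
    using c assms(2-5) by (intro finsum_in_left_span_image[OF assms(1)]) (auto simp: subset_iff Pi_iff)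
  also have "(\<lambda>p. fst p \<otimes> snd p) ` (G \<times> H) = {g \<otimes> h | g h. g \<in> G \<and> h \<in> H}"
    by force
  finally show ?thesis .
qed

lemma (in ring_hom_ring) generate_ring_image:
  assumes "A \<subseteq> carrier R"
  shows "h ` generate_ring R A \<subseteq> generate_ring S (h ` A)"
proof -
  have "h x \<in> generate_ring S (h ` A)" if "x \<in> generate_ring R A" for x
    using that
    by (induct rule: generate_ring.induct)
       (auto intro: generate_ring.intros simp: R.generate_ring_in_carrier[OF assms])
  then show ?thesis by blast
qed

lemma (in ring_hom_ring) image_left_span_subset:
  assumes "subring T S" and "h ` T' \<subseteq> T" and "T' \<subseteq> carrier R"
    and "finite G" and "G \<subseteq> carrier R"
  shows "h ` left_span R T' G \<subseteq> left_span S T (h ` G)"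
proof
  fix y assume "y \<in> h ` left_span R T' G"
  then obtain c where c: "c \<in> G \<rightarrow> T'" and y: "y = h (finsum R (\<lambda>g. c g \<otimes> g) G)"
    unfolding left_span_def by blast
  have cR: "c \<in> G \<rightarrow> carrier R" using c assms(3) by blast
  have "y = finsum S (\<lambda>g. h (c g) \<otimes>\<^bsub>S\<^esub> h g) G"
    using cR assms(5) by (auto simp: y Pi_iff subset_iff intro!: S.add.finprod_cong')
  also have "\<dots> \<in> left_span S T (h ` G)"
    using c assms by (intro S.finsum_in_left_span_image) auto
  finally show "y \<in> left_span S T (h ` G)" .
qed

lemma (in ring_hom_ring) fin_gen_left_module_tower:
  assumes "fin_gen_left_module S (h ` carrier R)" and "fin_gen_left_module R T'"
    and "T' \<subseteq> carrier R" and "subring T S" and "h ` T' \<subseteq> T"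
  shows "fin_gen_left_module S T"
proof -
  obtain H where H: "finite H" "H \<subseteq> carrier S" "carrier S \<subseteq> left_span S (h ` carrier R) H"
    using assms(1) unfolding fin_gen_left_module_iff by blast
  obtain G where G: "finite G" "G \<subseteq> carrier R" "carrier R \<subseteq> left_span R T' G"
    using assms(2) unfolding fin_gen_left_module_iff by blast
  have hR: "h ` carrier R \<subseteq> left_span S T (h ` G)"
    using image_left_span_subset[OF assms(4,5,3) G(1,2)] G(3) by blast
  have "carrier S \<subseteq> left_span S T {g \<otimes>\<^bsub>S\<^esub> k | g k. g \<in> h ` G \<and> k \<in> H}"
  proof
    fix s assume "s \<in> carrier S"
    then obtain r where r: "r \<in> H \<rightarrow> h ` carrier R" and s: "s = finsum S (\<lambda>k. r k \<otimes>\<^bsub>S\<^esub> k) H"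
      using H(3) unfolding left_span_def by blast
    have "r \<in> H \<rightarrow> left_span S T (h ` G)" using r hR by blast
    then show "s \<in> left_span S T {g \<otimes>\<^bsub>S\<^esub> k | g k. g \<in> h ` G \<and> k \<in> H}"
      unfolding s using G(1,2) H(1,2) by (intro S.finsum_in_left_span_tower[OF assms(4)]) auto
  qed
  moreover have "finite {g \<otimes>\<^bsub>S\<^esub> k | g k. g \<in> h ` G \<and> k \<in> H}"
    using finite_image_set2[of "\<lambda>g. g \<in> h ` G" "\<lambda>k. k \<in> H"] G(1) H(1) by simp
  moreover have "{g \<otimes>\<^bsub>S\<^esub> k | g k. g \<in> h ` G \<and> k \<in> H} \<subseteq> carrier S"
    using G(2) H(2) by (auto simp: subset_iff)
  ultimately show ?thesis unfolding fin_gen_left_module_iff by blast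
qed

lemma (in ring) elem_monomial_closed:
  assumes "\<forall>i<k. a i \<in> carrier R"
  shows "elem_monomial R a k \<beta> \<in> carrier R"
  using assms by (induct k) auto

lemma (in ring_hom_ring) elem_monomial_hom:
  assumes "\<forall>i<k. a i \<in> carrier R"
  shows "h (elem_monomial R a k \<beta>) = elem_monomial S (h \<circ> a) k \<beta>"
  using assms by (induct k) (simp_all add: R.elem_monomial_closed hom_nat_pow)

lemma (in ring_hom_ring) automorphic_over_image:
  assumes "automorphic_over R \<iota> \<tau> a" and "\<forall>b. \<iota> b \<in> carrier R"
  shows "automorphic_over S (h \<circ> \<iota>) \<tau> (h a)"
  using assms unfolding automorphic_over_def by (simp flip: hom_mult)

lemma (in ring_hom_ring) left_alg_indep_image:
  assumes "inj_on h (carrier R)" and "\<forall>b. \<iota> b \<in> carrier R" and "\<forall>i<m. a i \<in> carrier R"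
    and "left_alg_indep R \<iota> a m"
  shows "left_alg_indep S (h \<circ> \<iota>) (h \<circ> a) m"
  unfolding left_alg_indep_def
proof (intro allI impI)
  fix B c
  assume B: "finite B \<and> (\<forall>\<beta>\<in>B. \<forall>i\<ge>m. \<beta> i = 0) \<and>
    finsum S (\<lambda>\<beta>. (h \<circ> \<iota>) (c \<beta>) \<otimes>\<^bsub>S\<^esub> elem_monomial S (h \<circ> a) m \<beta>) B = \<zero>\<^bsub>S\<^esub>"
  let ?f = "\<lambda>\<beta>. \<iota> (c \<beta>) \<otimes> elem_monomial R a m \<beta>"
  have fR: "?f \<in> B \<rightarrow> carrier R"
    using assms(2,3) by (auto intro: R.elem_monomial_closed)
  have "h (finsum R ?f B) = finsum S (h \<circ> ?f) B" using fR by simp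
  also have "\<dots> = finsum S (\<lambda>\<beta>. (h \<circ> \<iota>) (c \<beta>) \<otimes>\<^bsub>S\<^esub> elem_monomial S (h \<circ> a) m \<beta>) B"
    using assms(2,3) by (intro S.add.finprod_cong')
      (auto simp: elem_monomial_hom R.elem_monomial_closed intro!: S.elem_monomial_closed)
  also have "\<dots> = h \<zero>" using B by simp
  finally have "finsum R ?f B = \<zero>"
    by (rule inj_onD[OF assms(1)]) (use fR in \<open>auto intro: R.finsum_closed\<close>)
  then show "\<forall>\<beta>\<in>B. c \<beta> = 0" using assms(4) B unfolding left_alg_indep_def by blast
qed

lemma (in ring_hom_ring) aut_normalizable_image:
  assumes "inj_on h (carrier R)" and "\<forall>b. \<iota> b \<in> carrier R"
    and "fin_gen_left_module S (h ` carrier R)" and "aut_normalizable R \<iota>"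
  shows "aut_normalizable S (h \<circ> \<iota>)"
proof -
  obtain m a \<tau> where \<tau>: "commuting_automorphisms \<tau> m"
    and a: "\<forall>i<m. automorphic_over R \<iota> (\<tau> i) (a i)"
    and comm: "\<forall>i<m. \<forall>j<m. a i \<otimes> a j = a j \<otimes> a i"
    and indep: "left_alg_indep R \<iota> a m"
    and fin: "fin_gen_left_module R (generate_ring R (range \<iota> \<union> a ` {..<m}))"
    using assms(4) unfolding aut_normalizable_def by blast
  have aR: "\<forall>i<m. a i \<in> carrier R" using a unfolding automorphic_over_def by blast
  have gens: "range \<iota> \<union> a ` {..<m} \<subseteq> carrier R" using assms(2) aR by auto
  have img: "h ` (range \<iota> \<union> a ` {..<m}) = range (h \<circ> \<iota>) \<union> (h \<circ> a) ` {..<m}"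
    by (simp add: image_Un image_comp)
  have "fin_gen_left_module S (generate_ring S (range (h \<circ> \<iota>) \<union> (h \<circ> a) ` {..<m}))"
  proof (rule fin_gen_left_module_tower[OF assms(3) fin])
    show "generate_ring R (range \<iota> \<union> a ` {..<m}) \<subseteq> carrier R"
      by (rule R.generate_ring_incl[OF gens])
    show "subring (generate_ring S (range (h \<circ> \<iota>) \<union> (h \<circ> a) ` {..<m})) S"
      using gens by (intro S.generate_ring_is_subring) auto
    show "h ` generate_ring R (range \<iota> \<union> a ` {..<m})
        \<subseteq> generate_ring S (range (h \<circ> \<iota>) \<union> (h \<circ> a) ` {..<m})"
      using generate_ring_image[OF gens] unfolding img .
  qed
  moreover have "\<forall>i<m. automorphic_over S (h \<circ> \<iota>) (\<tau> i) ((h \<circ> a) i)"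
    using a assms(2) by (simp add: automorphic_over_image)
  moreover have "\<forall>i<m. \<forall>j<m. (h \<circ> a) i \<otimes>\<^bsub>S\<^esub> (h \<circ> a) j = (h \<circ> a) j \<otimes>\<^bsub>S\<^esub> (h \<circ> a) i"
    using comm aR by (simp flip: hom_mult)
  ultimately show ?thesis
    using \<tau> left_alg_indep_image[OF assms(1,2) aR indep] unfolding aut_normalizable_def by blast
qed

lemma finite_below_iff:
  "finite {\<alpha>::nat \<Rightarrow> nat. \<forall>i. \<alpha> i \<le> \<gamma> i} \<longleftrightarrow> finite {i. \<gamma> i \<noteq> 0}"
proof
  let ?unit = "\<lambda>i j. if j = i then 1 else 0 :: nat"
  assume fin: "finite {\<alpha>. \<forall>i. \<alpha> i \<le> \<gamma> i}"
  have "?unit ` {i. \<gamma> i \<noteq> 0} \<subseteq> {\<alpha>. \<forall>i. \<alpha> i \<le> \<gamma> i}" by auto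
  then have "finite (?unit ` {i. \<gamma> i \<noteq> 0})" using fin by (rule finite_subset)
  then show "finite {i. \<gamma> i \<noteq> 0}"
    by (rule finite_imageD) (auto simp: inj_on_def fun_eq_iff split: if_splits)
next
  let ?A = "{i. \<gamma> i \<noteq> 0}"
  assume fin: "finite ?A"
  have "{\<alpha>. \<forall>i. \<alpha> i \<le> \<gamma> i} \<subseteq> {\<alpha>. \<forall>i. (i \<in> ?A \<longrightarrow> \<alpha> i \<in> {..sum \<gamma> ?A}) \<and> (i \<notin> ?A \<longrightarrow> \<alpha> i = 0)}"
    using member_le_sum[OF _ _ fin, of _ \<gamma>] by (auto intro: order.trans) (metis le_zero_eq)
  then show "finite {\<alpha>. \<forall>i. \<alpha> i \<le> \<gamma> i}"
    using finite_set_of_finite_funs[OF fin, of "{..sum \<gamma> ?A}" 0] finite_subset by blast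
qed

lemma aut_pow_fixed:
  assumes "\<forall>i<k. \<sigma> i x = x"
  shows "aut_pow \<sigma> k e x = x"
proof -
  have "(f ^^ m) x = x" if "f x = x" for f :: "'a \<Rightarrow> 'a" and m
    using that by (induct m) auto
  then show ?thesis using assms by (induct k) auto
qed

lemma aut_pow_cong:
  assumes "\<forall>i<k. \<sigma> i = \<sigma>' i"
  shows "aut_pow \<sigma> k e = aut_pow \<sigma>' k e"
  using assms by (induct k) simp_all

lemma aut_pow_scaled:
  "aut_pow \<sigma> k (\<lambda>i. d i * \<beta> i) = aut_pow (\<lambda>i. \<sigma> i ^^ d i) k \<beta>"
  by (induct k) (auto simp: funpow_mult)

lemma skew_poly_ring_cong:
  assumes "\<forall>i<n. \<sigma> i = \<sigma>' i"
  shows "skew_poly_ring \<sigma> n = skew_poly_ring \<sigma>' n"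
  by (simp add: skew_poly_ring_def skew_mult_def[abs_def] aut_pow_cong[OF assms])

lemma carrier_skew_poly_ring: "carrier (skew_poly_ring \<sigma> n) = skew_carrier n"
  by (simp add: skew_poly_ring_def)

lemma skew_carrier_iff:
  "p \<in> skew_carrier n \<longleftrightarrow> finite {e. p e \<noteq> 0} \<and> {e. p e \<noteq> 0} \<subseteq> {e. \<forall>i\<ge>n. e i = 0}"
  unfolding skew_carrier_def by blast

lemma sum_below_scaled:
  fixes f :: "(nat \<Rightarrow> nat) \<Rightarrow> 'b::comm_monoid_add"
  assumes d: "\<And>i. 0 < d i" and f: "\<And>\<alpha>. \<not> (\<forall>i. d i dvd \<alpha> i) \<Longrightarrow> f \<alpha> = 0"
  shows "(\<Sum>\<alpha> | \<forall>i. \<alpha> i \<le> d i * \<delta> i. f \<alpha>) = (\<Sum>\<beta> | \<forall>i. \<beta> i \<le> \<delta> i. f (\<lambda>i. d i * \<beta> i))"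
proof -
  let ?M = "\<lambda>\<beta> i. d i * \<beta> i"
  have nonzero: "d i \<noteq> 0" for i using d[of i] by simp
  have inj: "inj ?M" by (auto simp: inj_def fun_eq_iff nonzero)
  have supp: "{i. d i * \<delta> i \<noteq> 0} = {i. \<delta> i \<noteq> 0}" using d by simp
  show ?thesis
  proof (cases "finite {i. \<delta> i \<noteq> 0}")
    case True
    have "?M ` {\<beta>. \<forall>i. \<beta> i \<le> \<delta> i} \<subseteq> {\<alpha>. \<forall>i. \<alpha> i \<le> d i * \<delta> i}" by auto
    moreover have "f \<alpha> = 0" if "\<alpha> \<in> {\<alpha>. \<forall>i. \<alpha> i \<le> d i * \<delta> i} - ?M ` {\<beta>. \<forall>i. \<beta> i \<le> \<delta> i}" for \<alpha>
    proof (rule f)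
      show "\<not> (\<forall>i. d i dvd \<alpha> i)"
      proof
        assume "\<forall>i. d i dvd \<alpha> i"
        then have "\<alpha> = ?M (\<lambda>i. \<alpha> i div d i)" by (simp add: fun_eq_iff)
        moreover have "\<alpha> i div d i \<le> \<delta> i" for i
          using div_le_mono[of "\<alpha> i" "d i * \<delta> i" "d i"] that d[of i] by simp
        ultimately show False
          using that image_eqI[of \<alpha> ?M "\<lambda>i. \<alpha> i div d i" "{\<beta>. \<forall>i. \<beta> i \<le> \<delta> i}"] by blast
      qed
    qed
    ultimately have "(\<Sum>\<alpha> | \<forall>i. \<alpha> i \<le> d i * \<delta> i. f \<alpha>) = sum f (?M ` {\<beta>. \<forall>i. \<beta> i \<le> \<delta> i})"
      using True supp finite_below_iff by (intro sum.mono_neutral_right) auto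
    also have "\<dots> = (\<Sum>\<beta> | \<forall>i. \<beta> i \<le> \<delta> i. f (?M \<beta>))"
      using inj by (simp add: sum.reindex inj_on_def inj_def)
    finally show ?thesis .
  next
    case False
    then have "infinite {\<alpha>. \<forall>i. \<alpha> i \<le> d i * \<delta> i}" "infinite {\<beta>. \<forall>i. \<beta> i \<le> \<delta> i}"
      using supp by (simp_all add: finite_below_iff)
    then show ?thesis by simp
  qed
qed

lemma ring_pullback:
  assumes "ring R" and "abelian_group R'"
    and carrier: "\<And>x. \<phi> x \<in> carrier R \<longleftrightarrow> x \<in> carrier R'"
    and inj: "inj_on \<phi> (carrier R')"
    and mult: "\<And>x y. \<lbrakk>x \<in> carrier R'; y \<in> carrier R'\<rbrakk> \<Longrightarrow> \<phi> (x \<otimes>\<^bsub>R'\<^esub> y) = \<phi> x \<otimes>\<^bsub>R\<^esub> \<phi> y"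
    and add: "\<And>x y. \<lbrakk>x \<in> carrier R'; y \<in> carrier R'\<rbrakk> \<Longrightarrow> \<phi> (x \<oplus>\<^bsub>R'\<^esub> y) = \<phi> x \<oplus>\<^bsub>R\<^esub> \<phi> y"
    and one: "\<phi> \<one>\<^bsub>R'\<^esub> = \<one>\<^bsub>R\<^esub>"
  shows "ring R'"
proof -
  interpret R: ring R by fact
  have closed: "x \<otimes>\<^bsub>R'\<^esub> y \<in> carrier R'" if "x \<in> carrier R'" "y \<in> carrier R'" for x y
    using that by (simp flip: carrier add: mult)
  have eq: "x = y" if "\<phi> x = \<phi> y" "x \<in> carrier R'" "y \<in> carrier R'" for x y
    using inj that by (rule inj_onD)
  show ?thesis
  proof (rule ringI)
    show "monoid R'"
    proof (rule monoidI)
      show "\<one>\<^bsub>R'\<^esub> \<in> carrier R'" by (simp flip: carrier add: one)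
      fix x y z assume xyz: "x \<in> carrier R'" "y \<in> carrier R'" "z \<in> carrier R'"
      show "x \<otimes>\<^bsub>R'\<^esub> y \<in> carrier R'" using xyz(1,2) by (rule closed)
      show "x \<otimes>\<^bsub>R'\<^esub> y \<otimes>\<^bsub>R'\<^esub> z = x \<otimes>\<^bsub>R'\<^esub> (y \<otimes>\<^bsub>R'\<^esub> z)"
        using xyz by (intro eq) (simp_all flip: carrier add: closed mult R.m_assoc)
      show "\<one>\<^bsub>R'\<^esub> \<otimes>\<^bsub>R'\<^esub> x = x" and "x \<otimes>\<^bsub>R'\<^esub> \<one>\<^bsub>R'\<^esub> = x"
        using xyz by (intro eq; simp flip: carrier add: closed mult one)+
    qed
    fix x y z assume xyz: "x \<in> carrier R'" "y \<in> carrier R'" "z \<in> carrier R'"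
    show "(x \<oplus>\<^bsub>R'\<^esub> y) \<otimes>\<^bsub>R'\<^esub> z = x \<otimes>\<^bsub>R'\<^esub> z \<oplus>\<^bsub>R'\<^esub> y \<otimes>\<^bsub>R'\<^esub> z"
      and "z \<otimes>\<^bsub>R'\<^esub> (x \<oplus>\<^bsub>R'\<^esub> y) = z \<otimes>\<^bsub>R'\<^esub> x \<oplus>\<^bsub>R'\<^esub> z \<otimes>\<^bsub>R'\<^esub> y"
      using xyz by (intro eq; simp flip: carrier add: closed mult add R.l_distr R.r_distr)+
  qed fact
qed

text \<open>The image of \<open>p\<close> under the substitution \<open>t\<^sub>i \<mapsto> t\<^sub>i ^ d i\<close>.\<close>

definition pow_subst :: "(nat \<Rightarrow> nat) \<Rightarrow> ((nat \<Rightarrow> nat) \<Rightarrow> 'a::zero) \<Rightarrow> (nat \<Rightarrow> nat) \<Rightarrow> 'a" where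
  "pow_subst d p = (\<lambda>\<gamma>. if \<forall>i. d i dvd \<gamma> i then p (\<lambda>i. \<gamma> i div d i) else 0)"

lemma pow_subst_scaled:
  assumes "\<And>i. 0 < d i"
  shows "pow_subst d p (\<lambda>i. d i * \<beta> i) = p \<beta>"
  using assms by (simp add: pow_subst_def)

lemma pow_subst_eq_0: "\<not> (\<forall>i. d i dvd \<gamma> i) \<Longrightarrow> pow_subst d p \<gamma> = 0"
  by (auto simp: pow_subst_def)

lemma inj_pow_subst:
  assumes "\<And>i. 0 < d i"
  shows "inj (pow_subst d)"
proof (rule injI)
  fix p q :: "(nat \<Rightarrow> nat) \<Rightarrow> 'a"
  assume "pow_subst d p = pow_subst d q"
  then have "pow_subst d p (\<lambda>i. d i * \<beta> i) = pow_subst d q (\<lambda>i. d i * \<beta> i)" for \<beta> by simp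
  then show "p = q" by (simp add: pow_subst_scaled[OF assms] fun_eq_iff)
qed

lemma pow_subst_add:
  fixes p q :: "(nat \<Rightarrow> nat) \<Rightarrow> 'a::monoid_add"
  shows "pow_subst d (\<lambda>e. p e + q e) = (\<lambda>e. pow_subst d p e + pow_subst d q e)"
  by (simp add: pow_subst_def fun_eq_iff)

lemma pow_subst_const:
  assumes "\<And>i. 0 < d i"
  shows "pow_subst d (skew_const c) = skew_const c"
proof
  fix \<gamma> :: "nat \<Rightarrow> nat"
  have "(\<forall>i. d i dvd \<gamma> i) \<and> (\<lambda>i. \<gamma> i div d i) = (\<lambda>_. 0) \<longleftrightarrow> \<gamma> = (\<lambda>_. 0)"
    using assms by (auto simp: fun_eq_iff) (metis dvd_div_eq_0_iff)
  then show "pow_subst d (skew_const c) \<gamma> = skew_const c \<gamma>"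
    unfolding pow_subst_def skew_const_def by auto
qed

lemma pow_subst_support:
  assumes "\<And>i. 0 < d i"
  shows "{\<gamma>. pow_subst d p \<gamma> \<noteq> 0} = (\<lambda>\<beta> i. d i * \<beta> i) ` {\<beta>. p \<beta> \<noteq> 0}"
proof
  show "{\<gamma>. pow_subst d p \<gamma> \<noteq> 0} \<subseteq> (\<lambda>\<beta> i. d i * \<beta> i) ` {\<beta>. p \<beta> \<noteq> 0}"
  proof
    fix \<gamma> assume "\<gamma> \<in> {\<gamma>. pow_subst d p \<gamma> \<noteq> 0}"
    then have "\<forall>i. d i dvd \<gamma> i" and "p (\<lambda>i. \<gamma> i div d i) \<noteq> 0"
      by (auto simp: pow_subst_def split: if_splits)
    moreover from this have "\<gamma> = (\<lambda>i. d i * (\<gamma> i div d i))" by (simp add: fun_eq_iff)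
    ultimately show "\<gamma> \<in> (\<lambda>\<beta> i. d i * \<beta> i) ` {\<beta>. p \<beta> \<noteq> 0}"
      by (intro image_eqI[where x = "\<lambda>i. \<gamma> i div d i"]) auto
  qed
qed (auto simp: pow_subst_scaled[OF assms])

lemma pow_subst_carrier_iff:
  assumes "\<And>i. 0 < d i"
  shows "pow_subst d p \<in> skew_carrier n \<longleftrightarrow> p \<in> skew_carrier n"
proof -
  let ?M = "\<lambda>\<beta> i. d i * \<beta> i"
  have nonzero: "d i \<noteq> 0" for i using assms[of i] by simp
  have "inj ?M" by (auto simp: inj_def fun_eq_iff nonzero)
  moreover have "?M \<beta> \<in> {e. \<forall>i\<ge>n. e i = 0} \<longleftrightarrow> \<beta> \<in> {e. \<forall>i\<ge>n. e i = 0}" for \<beta>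
    by (simp add: nonzero)
  ultimately show ?thesis
    unfolding skew_carrier_iff pow_subst_support[OF assms]
    by (auto simp: finite_image_iff inj_on_def inj_def)
qed

lemma pow_subst_mult:
  assumes "\<forall>i<n. \<sigma> i 0 = 0" and pos: "\<And>i. 0 < d i"
  shows "pow_subst d (skew_mult (\<lambda>i. \<sigma> i ^^ d i) n p q)
       = skew_mult \<sigma> n (pow_subst d p) (pow_subst d q)"
proof
  fix \<gamma>
  let ?f = "\<lambda>\<alpha>. pow_subst d p \<alpha> * aut_pow \<sigma> n \<alpha> (pow_subst d q (\<lambda>i. \<gamma> i - \<alpha> i))"
  have aut_zero: "aut_pow \<sigma> n \<alpha> 0 = 0" for \<alpha> using assms(1) by (rule aut_pow_fixed)
  show "pow_subst d (skew_mult (\<lambda>i. \<sigma> i ^^ d i) n p q) \<gamma>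
      = skew_mult \<sigma> n (pow_subst d p) (pow_subst d q) \<gamma>"
  proof (cases "\<forall>i. d i dvd \<gamma> i")
    case True
    define \<delta> where "\<delta> i = \<gamma> i div d i" for i
    have \<gamma>: "\<gamma> = (\<lambda>i. d i * \<delta> i)" using True by (simp add: \<delta>_def fun_eq_iff)
    have "skew_mult \<sigma> n (pow_subst d p) (pow_subst d q) \<gamma> = (\<Sum>\<alpha> | \<forall>i. \<alpha> i \<le> d i * \<delta> i. ?f \<alpha>)"
      by (simp add: skew_mult_def \<gamma>)
    also have "\<dots> = (\<Sum>\<beta> | \<forall>i. \<beta> i \<le> \<delta> i. ?f (\<lambda>i. d i * \<beta> i))"
      by (rule sum_below_scaled[OF pos]) (simp add: pow_subst_eq_0)
    also have "\<dots> = (\<Sum>\<beta> | \<forall>i. \<beta> i \<le> \<delta> i.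
        p \<beta> * aut_pow (\<lambda>i. \<sigma> i ^^ d i) n \<beta> (q (\<lambda>i. \<delta> i - \<beta> i)))"
    proof (rule sum.cong[OF refl])
      fix \<beta>
      have "(\<lambda>i. d i * \<delta> i - d i * \<beta> i) = (\<lambda>i. d i * (\<delta> i - \<beta> i))"
        by (simp add: diff_mult_distrib2)
      then show "?f (\<lambda>i. d i * \<beta> i) = p \<beta> * aut_pow (\<lambda>i. \<sigma> i ^^ d i) n \<beta> (q (\<lambda>i. \<delta> i - \<beta> i))"
        by (simp add: \<gamma> pow_subst_scaled[OF pos] aut_pow_scaled)
    qed
    also have "\<dots> = pow_subst d (skew_mult (\<lambda>i. \<sigma> i ^^ d i) n p q) \<gamma>"
      by (simp add: \<gamma> pow_subst_scaled[OF pos] skew_mult_def)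
    finally show ?thesis ..
  next
    case False
    have "?f \<alpha> = 0" if "\<forall>i. \<alpha> i \<le> \<gamma> i" for \<alpha>
    proof (cases "\<forall>i. d i dvd \<alpha> i")
      case True
      have "\<not> (\<forall>i. d i dvd (\<gamma> i - \<alpha> i))"
      proof
        assume "\<forall>i. d i dvd (\<gamma> i - \<alpha> i)"
        then have "\<forall>i. d i dvd (\<alpha> i + (\<gamma> i - \<alpha> i))" using True by simp
        then show False using False that by simp
      qed
      then show ?thesis by (simp add: pow_subst_eq_0 aut_zero)
    qed (simp add: pow_subst_eq_0)
    then have "skew_mult \<sigma> n (pow_subst d p) (pow_subst d q) \<gamma> = 0"
      unfolding skew_mult_def by (intro sum.neutral) simp
    then show ?thesis using False by (simp add: pow_subst_eq_0)
  qed
qed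

lemma ring_automorphism_zero: "ring_automorphism f \<Longrightarrow> f 0 = 0"
  unfolding ring_automorphism_def by (metis add_cancel_right_right)

lemma ring_automorphism_one: "ring_automorphism f \<Longrightarrow> f 1 = 1"
  by (simp add: ring_automorphism_def)

lemma skew_const_carrier: "skew_const c \<in> skew_carrier n"
  unfolding skew_carrier_iff skew_const_def by (auto intro: finite_subset[of _ "{\<lambda>_. 0}"])

definition skew_monom :: "(nat \<Rightarrow> nat) \<Rightarrow> (nat \<Rightarrow> nat) \<Rightarrow> 'a::zero_neq_one" where
  "skew_monom r = (\<lambda>\<gamma>. if \<gamma> = r then 1 else 0)"

lemma skew_monom_carrier: "\<forall>i\<ge>n. r i = 0 \<Longrightarrow> skew_monom r \<in> skew_carrier n"
  unfolding skew_carrier_def skew_monom_def by auto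

lemma skew_mult_monom:
  assumes "\<forall>i<n. ring_automorphism (\<sigma> i)" and "\<forall>i\<ge>n. \<gamma> i = 0"
  shows "skew_mult \<sigma> n q (skew_monom r) \<gamma> = (if \<forall>i. r i \<le> \<gamma> i then q (\<lambda>i. \<gamma> i - r i) else 0)"
proof -
  have "{i. \<gamma> i \<noteq> 0} \<subseteq> {..<n}" using assms(2) by (auto simp: not_less[symmetric])
  then have fin: "finite {\<alpha>. \<forall>i. \<alpha> i \<le> \<gamma> i}"
    by (simp add: finite_below_iff finite_subset)
  have aut: "aut_pow \<sigma> n \<alpha> 1 = 1" "aut_pow \<sigma> n \<alpha> 0 = 0" for \<alpha>
    using assms(1) by (simp_all add: aut_pow_fixed ring_automorphism_one ring_automorphism_zero)
  have "skew_mult \<sigma> n q (skew_monom r) \<gamma>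
      = (\<Sum>\<alpha> | \<forall>i. \<alpha> i \<le> \<gamma> i. if \<alpha> = (\<lambda>i. \<gamma> i - r i) then
           (if \<forall>i. r i \<le> \<gamma> i then q \<alpha> else 0) else 0)"
  proof (unfold skew_mult_def, rule sum.cong[OF refl])
    fix \<alpha> assume "\<alpha> \<in> {\<alpha>. \<forall>i. \<alpha> i \<le> \<gamma> i}"
    then have "(\<lambda>i. \<gamma> i - \<alpha> i) = r \<longleftrightarrow> \<alpha> = (\<lambda>i. \<gamma> i - r i) \<and> (\<forall>i. r i \<le> \<gamma> i)"
      by (auto simp: fun_eq_iff) (metis diff_diff_cancel, metis diff_le_self)
    then show "q \<alpha> * aut_pow \<sigma> n \<alpha> (skew_monom r (\<lambda>i. \<gamma> i - \<alpha> i))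
        = (if \<alpha> = (\<lambda>i. \<gamma> i - r i) then (if \<forall>i. r i \<le> \<gamma> i then q \<alpha> else 0) else 0)"
      by (auto simp: skew_monom_def aut)
  qed
  also have "\<dots> = (if \<forall>i. r i \<le> \<gamma> i then q (\<lambda>i. \<gamma> i - r i) else 0)"
    using fin by (subst sum.delta) auto
  finally show ?thesis .
qed

lemma finsum_skew_poly_ring_apply:
  assumes "ring (skew_poly_ring \<sigma> n)" and "f \<in> A \<rightarrow> carrier (skew_poly_ring \<sigma> n)"
  shows "finsum (skew_poly_ring \<sigma> n) f A \<gamma> = (\<Sum>x\<in>A. f x \<gamma>)"
proof -
  interpret ring "skew_poly_ring \<sigma> n" by fact
  show ?thesis
    using assms(2)
  proof (induct A rule: infinite_finite_induct)
    case (insert x A)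
    then show ?case by (simp add: finsum_insert) (simp add: skew_poly_ring_def)
  qed (simp_all add: finsum_infinite, simp_all add: skew_poly_ring_def)
qed

lemma le_dvd_diff_iff_eq_mod:
  fixes r g k :: nat
  assumes "r < k"
  shows "r \<le> g \<and> k dvd g - r \<longleftrightarrow> r = g mod k"
proof
  assume "r \<le> g \<and> k dvd g - r"
  then obtain t where "g = k * t + r" by (metis dvdE le_add_diff_inverse2)
  then show "r = g mod k" using assms by simp
qed (simp add: minus_mod_eq_mult_div)

definition residue_part :: "(nat \<Rightarrow> nat) \<Rightarrow> ((nat \<Rightarrow> nat) \<Rightarrow> 'a) \<Rightarrow> (nat \<Rightarrow> nat) \<Rightarrow> (nat \<Rightarrow> nat) \<Rightarrow> 'a"
  where "residue_part d p r = (\<lambda>\<beta>. p (\<lambda>i. d i * \<beta> i + r i))"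

text \<open>The exponents \<open>d i\<close> with \<open>i \<ge> n\<close> concern absent variables; fixing them to \<open>1\<close>
  makes the set of residues \<open>{r. \<forall>i. r i < d i}\<close> finite.\<close>

locale skew_power_subst =
  fixes \<sigma> :: "nat \<Rightarrow> 'a::division_ring \<Rightarrow> 'a" and n :: nat and d :: "nat \<Rightarrow> nat"
  assumes automorphisms: "\<forall>i<n. ring_automorphism (\<sigma> i)"
    and d_pos: "\<And>i. 0 < d i"
    and d_eq_1: "\<And>i. n \<le> i \<Longrightarrow> d i = 1"
begin

abbreviation "R \<equiv> skew_poly_ring \<sigma> n"
abbreviation "R_d \<equiv> skew_poly_ring (\<lambda>i. \<sigma> i ^^ d i) n"

text \<open>The ring axioms of \<open>R\<close> are a hypothesis below, never proved: wherever they are needed they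
  come with an ideal of \<open>R\<close>.\<close>

definition subst_quot :: "((nat \<Rightarrow> nat) \<Rightarrow> 'a) set \<Rightarrow> ((nat \<Rightarrow> nat) \<Rightarrow> 'a) \<Rightarrow> ((nat \<Rightarrow> nat) \<Rightarrow> 'a) set"
  where "subst_quot I p = I +>\<^bsub>R\<^esub> pow_subst d p"

lemma finite_residues: "finite {r. \<forall>i. r i < d i}"
proof -
  have "{r. \<forall>i. r i < d i} = {r. \<forall>i. r i \<le> d i - 1}"
    using d_pos by (auto simp: less_Suc_eq_le[symmetric])
  moreover have "{i. d i - 1 \<noteq> 0} \<subseteq> {..<n}"
    using d_eq_1 by (force simp: not_less[symmetric])
  ultimately show ?thesis by (simp add: finite_below_iff finite_subset)
qed

lemma skew_monom_closed:
  assumes "\<forall>i. r i < d i"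
  shows "skew_monom r \<in> carrier R"
proof -
  have "r i = 0" if "n \<le> i" for i using assms d_eq_1[OF that] by (metis less_one)
  then show ?thesis by (simp add: carrier_skew_poly_ring skew_monom_carrier)
qed

lemma residue_part_closed:
  assumes "p \<in> carrier R" and "\<forall>i. r i < d i"
  shows "residue_part d p r \<in> carrier R_d"
proof -
  let ?T = "\<lambda>\<beta> i. d i * \<beta> i + r i"
  have nonzero: "d i \<noteq> 0" for i using d_pos[of i] by simp
  have p: "p \<in> skew_carrier n" using assms(1) by (simp add: carrier_skew_poly_ring)
  have "?T ` {\<beta>. residue_part d p r \<beta> \<noteq> 0} \<subseteq> {e. p e \<noteq> 0}"
    by (auto simp: residue_part_def)
  then have "finite (?T ` {\<beta>. residue_part d p r \<beta> \<noteq> 0})"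
    using p unfolding skew_carrier_iff by (blast intro: finite_subset)
  then have "finite {\<beta>. residue_part d p r \<beta> \<noteq> 0}"
    by (rule finite_imageD) (auto simp: inj_on_def fun_eq_iff nonzero)
  moreover have "\<beta> i = 0" if "residue_part d p r \<beta> \<noteq> 0" "n \<le> i" for \<beta> i
  proof -
    have "d i * \<beta> i + r i = 0"
      using that p unfolding skew_carrier_def residue_part_def by blast
    then show ?thesis using d_eq_1[OF that(2)] by simp
  qed
  ultimately show ?thesis unfolding carrier_skew_poly_ring skew_carrier_def by blast
qed

lemma pow_subst_closed_iff: "pow_subst d p \<in> carrier R \<longleftrightarrow> p \<in> carrier R_d"
  by (simp add: carrier_skew_poly_ring pow_subst_carrier_iff[where d = d, OF d_pos])

lemma pow_subst_mult_hom: "pow_subst d (p \<otimes>\<^bsub>R_d\<^esub> q) = pow_subst d p \<otimes>\<^bsub>R\<^esub> pow_subst d q"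
proof -
  have "\<forall>i<n. \<sigma> i 0 = 0" using automorphisms ring_automorphism_zero by blast
  then show ?thesis
    by (simp add: skew_poly_ring_def pow_subst_mult[where \<sigma> = \<sigma> and n = n and d = d, OF _ d_pos])
qed

lemma pow_subst_add_hom: "pow_subst d (p \<oplus>\<^bsub>R_d\<^esub> q) = pow_subst d p \<oplus>\<^bsub>R\<^esub> pow_subst d q"
  by (simp add: skew_poly_ring_def pow_subst_add)

lemma pow_subst_one_hom: "pow_subst d \<one>\<^bsub>R_d\<^esub> = \<one>\<^bsub>R\<^esub>"
  by (simp add: skew_poly_ring_def pow_subst_const[where d = d, OF d_pos])

lemma ring_R_d:
  assumes "ring R"
  shows "ring R_d"
proof (rule ring_pullback[OF assms])
  show "abelian_group R_d"
    using ring.is_abelian_group[OF assms]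
    unfolding abelian_group_def abelian_monoid_def abelian_group_axioms_def
    by (simp add: skew_poly_ring_def)
  show "inj_on (pow_subst d) (carrier R_d)"
    by (rule inj_on_subset[OF inj_pow_subst[where d = d, OF d_pos] subset_UNIV])
qed (simp_all add: pow_subst_closed_iff pow_subst_mult_hom pow_subst_add_hom pow_subst_one_hom)

lemma subst_quot_hom:
  assumes "ideal I R"
  shows "ring_hom_ring R_d (R Quot I) (subst_quot I)"
proof -
  interpret ideal I R by fact
  have "pow_subst d \<in> ring_hom R_d R"
    by (rule ring_hom_memI) (simp_all add: pow_subst_closed_iff pow_subst_mult_hom
        pow_subst_add_hom pow_subst_one_hom)
  from ring_hom_trans[OF this rcos_ring_hom] show ?thesis
    by (intro ring_hom_ringI2 ring_R_d ring_axioms quotient_is_ring) (simp add: comp_def subst_quot_def[abs_def])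
qed

lemma subst_quot_kernel_proper:
  assumes "ideal I R" and "I \<noteq> carrier R"
  shows "a_kernel R_d (R Quot I) (subst_quot I) \<noteq> carrier R_d"
proof -
  interpret ideal I R by fact
  interpret h: ring_hom_ring R_d "R Quot I" "subst_quot I" using subst_quot_hom[OF assms(1)] .
  have "subst_quot I \<one>\<^bsub>R_d\<^esub> \<noteq> \<zero>\<^bsub>R Quot I\<^esub>"
  proof
    assume "subst_quot I \<one>\<^bsub>R_d\<^esub> = \<zero>\<^bsub>R Quot I\<^esub>"
    then have "I +>\<^bsub>R\<^esub> \<one>\<^bsub>R\<^esub> = I" by (simp add: subst_quot_def pow_subst_one_hom FactRing_def)
    then have "\<one>\<^bsub>R\<^esub> \<in> I" using a_rcos_self[of "\<one>\<^bsub>R\<^esub>"] by simp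
    then show False using assms(2) one_imp_carrier by blast
  qed
  then show ?thesis using h.R.one_closed unfolding a_kernel_def' by blast
qed

lemma skew_decomposition:
  assumes "ring R" and p: "p \<in> carrier R"
  shows "p = finsum R (\<lambda>r. pow_subst d (residue_part d p r) \<otimes>\<^bsub>R\<^esub> skew_monom r) {r. \<forall>i. r i < d i}"
proof
  fix \<gamma>
  let ?term = "\<lambda>r. pow_subst d (residue_part d p r) \<otimes>\<^bsub>R\<^esub> skew_monom r"
  have term_closed: "?term r \<in> carrier R" if "\<forall>i. r i < d i" for r
    using monoid.m_closed[OF ring.is_monoid[OF assms(1)]] residue_part_closed[OF p that]
      skew_monom_closed[OF that] by (simp add: pow_subst_closed_iff)
  have sum: "finsum R ?term {r. \<forall>i. r i < d i} \<gamma> = (\<Sum>r | \<forall>i. r i < d i. ?term r \<gamma>)"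
    using term_closed by (intro finsum_skew_poly_ring_apply[OF assms(1)]) auto
  show "p \<gamma> = finsum R ?term {r. \<forall>i. r i < d i} \<gamma>"
  proof (cases "\<forall>i\<ge>n. \<gamma> i = 0")
    case False
    then have "q \<gamma> = 0" if "q \<in> carrier R" for q
      using that unfolding carrier_skew_poly_ring skew_carrier_def by auto
    then have "p \<gamma> = 0" and "\<forall>r\<in>{r. \<forall>i. r i < d i}. ?term r \<gamma> = 0"
      using p term_closed by auto
    then show ?thesis by (simp add: sum sum.neutral)
  next
    case True
    have "?term r \<gamma> = (if r = (\<lambda>i. \<gamma> i mod d i) then p \<gamma> else 0)" if r: "\<forall>i. r i < d i" for r
    proof -
      have "?term r \<gamma> = (if \<forall>i. r i \<le> \<gamma> i then pow_subst d (residue_part d p r) (\<lambda>i. \<gamma> i - r i) else 0)"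
        using skew_mult_monom[OF automorphisms True] by (simp add: skew_poly_ring_def)
      also have "\<dots> = (if \<forall>i. r i \<le> \<gamma> i \<and> d i dvd \<gamma> i - r i then p \<gamma> else 0)"
      proof (cases "\<forall>i. r i \<le> \<gamma> i \<and> d i dvd \<gamma> i - r i")
        case True
        then have "(\<lambda>i. d i * ((\<gamma> i - r i) div d i) + r i) = \<gamma>" by (simp add: fun_eq_iff)
        then show ?thesis using True by (simp add: pow_subst_def residue_part_def)
      qed (auto intro!: pow_subst_eq_0)
      also have "(\<forall>i. r i \<le> \<gamma> i \<and> d i dvd \<gamma> i - r i) \<longleftrightarrow> r = (\<lambda>i. \<gamma> i mod d i)"
        using r le_dvd_diff_iff_eq_mod by (auto simp: fun_eq_iff)
      finally show ?thesis .
    qed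
    then have "(\<Sum>r | \<forall>i. r i < d i. ?term r \<gamma>)
        = (\<Sum>r | \<forall>i. r i < d i. if r = (\<lambda>i. \<gamma> i mod d i) then p \<gamma> else 0)"
      by (intro sum.cong) auto
    also have "\<dots> = p \<gamma>"
      using finite_residues d_pos by (simp add: sum.delta)
    finally show ?thesis by (simp add: sum)
  qed
qed

lemma fin_gen_left_module_quotient:
  assumes "ideal I R"
  shows "fin_gen_left_module (R Quot I) (subst_quot I ` carrier R_d)"
proof -
  interpret ideal I R by fact
  let ?Q = "R Quot I"
  let ?gens = "(\<lambda>r. I +>\<^bsub>R\<^esub> skew_monom r) ` {r. \<forall>i. r i < d i}"
  interpret Q: ring ?Q by (rule quotient_is_ring)
  interpret \<pi>: ring_hom_ring R ?Q "(+>\<^bsub>R\<^esub>) I" by (rule rcos_ring_hom_ring)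
  interpret h: ring_hom_ring R_d ?Q "subst_quot I" using subst_quot_hom[OF assms] .
  have sub: "subring (subst_quot I ` carrier R_d) ?Q"
    by (rule h.img_is_subring[OF h.R.carrier_is_subring])
  have "carrier ?Q \<subseteq> left_span ?Q (subst_quot I ` carrier R_d) ?gens"
  proof
    fix s assume "s \<in> carrier ?Q"
    then obtain p where p: "p \<in> carrier R" and s: "s = I +>\<^bsub>R\<^esub> p"
      unfolding FactRing_def A_RCOSETS_def' by auto
    let ?term = "\<lambda>r. pow_subst d (residue_part d p r) \<otimes>\<^bsub>R\<^esub> skew_monom r"
    have parts: "residue_part d p r \<in> carrier R_d" "pow_subst d (residue_part d p r) \<in> carrier R"
      if "\<forall>i. r i < d i" for r
      using residue_part_closed[OF p that] by (simp_all add: pow_subst_closed_iff)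
    have "s = I +>\<^bsub>R\<^esub> finsum R ?term {r. \<forall>i. r i < d i}"
      using skew_decomposition[OF ring_axioms p, symmetric] s by simp
    also have "\<dots> = finsum ?Q ((+>\<^bsub>R\<^esub>) I \<circ> ?term) {r. \<forall>i. r i < d i}"
      using parts skew_monom_closed by (intro \<pi>.hom_finsum) auto
    also have "\<dots> = finsum ?Q (\<lambda>r. subst_quot I (residue_part d p r) \<otimes>\<^bsub>?Q\<^esub> (I +>\<^bsub>R\<^esub> skew_monom r))
        {r. \<forall>i. r i < d i}"
      using parts skew_monom_closed by (intro Q.add.finprod_cong') (auto simp: subst_quot_def)
    also have "\<dots> \<in> left_span ?Q (subst_quot I ` carrier R_d) ?gens"
      using parts skew_monom_closed finite_residues by (intro Q.finsum_in_left_span_image[OF sub]) auto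
    finally show "s \<in> left_span ?Q (subst_quot I ` carrier R_d) ?gens" .
  qed
  moreover have "finite ?gens" using finite_residues by simp
  moreover have "?gens \<subseteq> carrier ?Q" using skew_monom_closed by auto
  ultimately show ?thesis unfolding fin_gen_left_module_iff by blast
qed

lemma aut_normalizable_quotient:
  assumes "ideal I R"
    and "aut_normalizable (R_d Quot a_kernel R_d (R Quot I) (subst_quot I))
      (\<lambda>c. a_kernel R_d (R Quot I) (subst_quot I) +>\<^bsub>R_d\<^esub> skew_const c)"
  shows "aut_normalizable (R Quot I) (\<lambda>c. I +>\<^bsub>R\<^esub> skew_const c)"
proof -
  interpret ideal I R by fact
  interpret h: ring_hom_ring R_d "R Quot I" "subst_quot I" using subst_quot_hom[OF assms(1)] .
  let ?J = "a_kernel R_d (R Quot I) (subst_quot I)"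
  let ?\<psi> = "\<lambda>X. the_elem (subst_quot I ` X)"
  have "ring_hom_ring (R_d Quot ?J) (R Quot I) ?\<psi>"
    using h.the_elem_hom ideal.quotient_is_ring[OF h.kernel_is_ideal] quotient_is_ring
    by (intro ring_hom_ringI2)
  moreover have "inj_on ?\<psi> (carrier (R_d Quot ?J))"
    using h.FactRing_iso_set_aux unfolding ring_iso_def bij_betw_def by blast
  moreover have "\<forall>c. ?J +>\<^bsub>R_d\<^esub> skew_const c \<in> carrier (R_d Quot ?J)"
    using ring_hom_closed[OF ideal.rcos_ring_hom[OF h.kernel_is_ideal]]
    by (simp add: skew_const_carrier carrier_skew_poly_ring)
  moreover have "fin_gen_left_module (R Quot I) (?\<psi> ` carrier (R_d Quot ?J))"
    using fin_gen_left_module_quotient[OF assms(1)] by (simp only: h.the_elem_surj)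
  ultimately have "aut_normalizable (R Quot I) (?\<psi> \<circ> (\<lambda>c. ?J +>\<^bsub>R_d\<^esub> skew_const c))"
    using assms(2) by (blast intro: ring_hom_ring.aut_normalizable_image)
  moreover have "?\<psi> (?J +>\<^bsub>R_d\<^esub> skew_const c) = I +>\<^bsub>R\<^esub> skew_const c" for c
    using h.the_elem_simp[of "skew_const c"]
    by (simp add: skew_const_carrier carrier_skew_poly_ring subst_quot_def
        pow_subst_const[where d = d, OF d_pos])
  ultimately show ?thesis by (simp add: comp_def)
qed

lemma aut_normalizable_tuple_of_powers:
  assumes "aut_normalizable_tuple (\<lambda>i. \<sigma> i ^^ d i) n"
  shows "aut_normalizable_tuple \<sigma> n"
  unfolding aut_normalizable_tuple_def
proof (intro allI impI, elim conjE)
  fix I assume I: "ideal I R" "I \<noteq> carrier R"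
  have "ideal (a_kernel R_d (R Quot I) (subst_quot I)) R_d"
    using ring_hom_ring.kernel_is_ideal[OF subst_quot_hom[OF I(1)]] .
  then show "aut_normalizable (R Quot I) (\<lambda>c. I +>\<^bsub>R\<^esub> skew_const c)"
    using assms subst_quot_kernel_proper[OF I] unfolding aut_normalizable_tuple_def
    by (blast intro: aut_normalizable_quotient[OF I(1)])
qed

end

lemma aut_normalizable_tuple_cong:
  assumes "\<forall>i<n. \<sigma> i = \<sigma>' i"
  shows "aut_normalizable_tuple \<sigma> n \<longleftrightarrow> aut_normalizable_tuple \<sigma>' n"
  unfolding aut_normalizable_tuple_def skew_poly_ring_cong[OF assms] ..

theorem proposition5p1:
  fixes \<sigma> :: "nat \<Rightarrow> 'a::division_ring \<Rightarrow> 'a" and n :: nat and d :: "nat \<Rightarrow> nat"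
  assumes "commuting_automorphisms \<sigma> n"
    and "\<not> aut_normalizable_tuple \<sigma> n"
    and "\<forall>i<n. d i > 0"
  shows "\<not> aut_normalizable_tuple (\<lambda>i. \<sigma> i ^^ d i) n"
proof -
  define d' where "d' i = (if i < n then d i else 1)" for i
  interpret skew_power_subst \<sigma> n d'
    using assms(1,3) by unfold_locales (auto simp: d'_def commuting_automorphisms_def)
  have "aut_normalizable_tuple (\<lambda>i. \<sigma> i ^^ d i) n \<longleftrightarrow> aut_normalizable_tuple (\<lambda>i. \<sigma> i ^^ d' i) n"
    by (rule aut_normalizable_tuple_cong) (simp add: d'_def)
  then show ?thesis using aut_normalizable_tuple_of_powers assms(2) by blast
qed

end
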